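(* Let $r>0$ and $d>0$ with $d\sqrt{2}<r$, and let $X\subseteq\mathbb{R}^2$ be a bounded $r$-regular set whose boundary $\partial X$ contains no point of the grid $d\mathbb{Z}^2$. Let $I$ be the digital image of $X$ by the lattice $d\mathbb{Z}^2$. Then one may construct from $I$ (i.e. as a function of the image $I$ alone) a set $\Gamma\subseteq\mathbb{R}^2$ such that $d_H(\partial\Gamma,\partial X)<d$.
   Context: A closed set $X\subseteq\mathbb{R}^2$ is $r$-regular if for each $x\in\partial X$ there are two open balls of radius $r$, $B_r(x_b)\subseteq X$ and $B_r(x_w)\subseteq \mathbb{R}^2\setminus X$, with $\overline{B_r(x_b)}\cap\overline{B_r(x_w)}=\{x\}$. The pixels of the lattice $d\mathbb{Z}^2$ are the closed squares $[dk,d(k+1)]\times[dl,d(l+1)]$, $k,l\in\mathbb{Z}$. The digital image of $X$ assigns to each pixel $C$ the intensity $\lambda=\phi(\mathrm{area}(X\cap C)/d^2)$, where $\phi:[0,1]\to[0,1]$ is a fixed monotonic function with $\phi(0)=0$, $\phi(1)=1$, $\phi((0,1))\subseteq(0,1)$. The Hausdorff distance is $d_H(Y,Z)=\max\{\sup_{y\in Y}\inf_{z\in Z}\|y-z\|,\ \sup_{z\in Z}\inf_{y\in Y}\|y-z\|\}$. *)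

theory Defs
  imports "HOL-Analysis.Analysis"
begin

definition r_regular :: "real \<Rightarrow> (real \<times> real) set \<Rightarrow> bool" where
  "r_regular r X \<longleftrightarrow> closed X \<and>
     (\<forall>x\<in>frontier X. \<exists>xb xw. ball xb r \<subseteq> X \<and> ball xw r \<subseteq> - X \<and>
        closure (ball xb r) \<inter> closure (ball xw r) = {x})"

definition pixel :: "real \<Rightarrow> int \<Rightarrow> int \<Rightarrow> (real \<times> real) set" where
  "pixel d k l = cbox (d * of_int k, d * of_int l) (d * of_int (k + 1), d * of_int (l + 1))"

definition digital_image ::
  "real \<Rightarrow> (real \<Rightarrow> real) \<Rightarrow> (real \<times> real) set \<Rightarrow> (int \<times> int \<Rightarrow> real)" where
  "digital_image d \<phi> X = (\<lambda>(k, l). \<phi> (measure lebesgue (X \<inter> pixel d k l) / d\<^sup>2))"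

text \<open>Hausdorff distance, literally as sup/inf in the extended reals
  (so the empty-set conventions are sup {} = -\<infinity>, inf {} = +\<infinity>).\<close>
definition hausdorff_dist :: "(real \<times> real) set \<Rightarrow> (real \<times> real) set \<Rightarrow> ereal" where
  "hausdorff_dist Y Z = max (SUP y\<in>Y. INF z\<in>Z. ereal (dist y z))
                            (SUP z\<in>Z. INF y\<in>Y. ereal (dist y z))"

end

theory Submission
  imports Defs
begin

text \<open>Take \<open>\<Gamma>\<close> to be the set of centres of the mixed pixels, those whose intensity lies strictly
  between 0 and 1, i.e. which meet \<open>X\<close> and its complement in positive measure. These centres are
  \<open>d\<close> apart, so \<open>\<Gamma>\<close> is its own boundary. A mixed pixel is connected and meets both \<open>X\<close> and its
  complement, hence contains a boundary point of \<open>X\<close>, at distance at most \<open>d / \<surd>2\<close> from its centre.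
  Conversely, a boundary point \<open>x\<close> of \<open>X\<close> lies in the closure of both the interior and the
  complement of \<open>X\<close> (the inner ball of \<open>r\<close>-regularity), so some pixel containing \<open>x\<close> has points of
  \<open>interior X\<close> and some has points outside \<open>X\<close>. If none of the pixels containing \<open>x\<close> were mixed,
  the first would lie in \<open>X\<close> and the second would miss \<open>interior X\<close>, and their common grid corner
  would be a grid point on the boundary of \<open>X\<close>.\<close>

lemma frontier_eq_self_if_uniformly_discrete:
  fixes S :: "'a::{metric_space, perfect_space} set"
  assumes "e > 0" and discrete: "\<forall>x\<in>S. \<forall>y\<in>S. dist y x < e \<longrightarrow> y = x"
  shows "frontier S = S"
proof -
  have "interior S = {}"
  proof (rule ccontr)
    assume "interior S \<noteq> {}"
    then obtain c \<epsilon> where "\<epsilon> > 0" "ball c \<epsilon> \<subseteq> S"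
      by (meson ex_in_conv mem_interior)
    moreover obtain y where "y \<noteq> c" "dist y c < min \<epsilon> e"
      using islimpt_UNIV[of c] \<open>e > 0\<close> \<open>\<epsilon> > 0\<close> unfolding islimpt_approachable
      by (meson UNIV_I min_less_iff_conj)
    ultimately have "y \<in> S" "c \<in> S"
      by (auto simp: dist_commute)
    with discrete \<open>dist y c < min \<epsilon> e\<close> \<open>y \<noteq> c\<close> show False
      by auto
  qed
  then show ?thesis
    using discrete_imp_closed[OF assms] by (simp add: frontier_def)
qed

lemma hausdorff_dist_le:
  assumes "\<forall>y\<in>Y. \<exists>z\<in>Z. dist y z \<le> e" and "\<forall>z\<in>Z. \<exists>y\<in>Y. dist y z \<le> e"
  shows "hausdorff_dist Y Z \<le> ereal e"
  unfolding hausdorff_dist_def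
proof (rule max.boundedI)
  show "(SUP y\<in>Y. INF z\<in>Z. ereal (dist y z)) \<le> ereal e"
  proof (rule SUP_least)
    fix y assume "y \<in> Y"
    then obtain z where "z \<in> Z" "dist y z \<le> e" using assms(1) by blast
    then show "(INF z\<in>Z. ereal (dist y z)) \<le> ereal e" by (intro INF_lower2) auto
  qed
  show "(SUP z\<in>Z. INF y\<in>Y. ereal (dist y z)) \<le> ereal e"
  proof (rule SUP_least)
    fix z assume "z \<in> Z"
    then obtain y where "y \<in> Y" "dist y z \<le> e" using assms(2) by blast
    then show "(INF y\<in>Y. ereal (dist y z)) \<le> ereal e" by (intro INF_lower2) auto
  qed
qed

lemma cbox_Int_interior_eq_empty_if_negligible:
  fixes X :: "'a::euclidean_space set"
  assumes "box a b \<noteq> {}" and "closed X" and "measure lebesgue (X \<inter> cbox a b) = 0"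
  shows "cbox a b \<inter> interior X = {}"
proof -
  have "negligible (X \<inter> cbox a b)"
    using assms(2,3) by (simp add: negligible_iff_measure lmeasurable_compact closed_Int_compact)
  then have "negligible (box a b \<inter> interior X)"
    by (rule negligible_subset) (use box_subset_cbox interior_subset in blast)
  then have "box a b \<inter> interior X = {}"
    by (meson open_Int open_box open_interior open_not_negligible)
  then have "closure (box a b) \<inter> interior X = {}"
    by (metis Int_commute open_Int_closure_eq_empty open_interior)
  then show ?thesis
    using assms(1) by simp
qed

lemma cbox_subset_if_measure_Int_eq:
  fixes X :: "'a::euclidean_space set"
  assumes "box a b \<noteq> {}" and "closed X"
    and "measure lebesgue (X \<inter> cbox a b) = measure lebesgue (cbox a b)"
  shows "cbox a b \<subseteq> X"
proof -
  have XC: "X \<inter> cbox a b \<in> lmeasurable"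
    using assms(2) by (simp add: lmeasurable_compact closed_Int_compact)
  have "cbox a b - X = cbox a b - (X \<inter> cbox a b)" by blast
  moreover have "measure lebesgue (cbox a b - (X \<inter> cbox a b))
      = measure lebesgue (cbox a b) - measure lebesgue (X \<inter> cbox a b)"
    by (intro measurable_measure_Diff lmeasurable_cbox fmeasurableD[OF XC]) auto
  ultimately have "negligible (cbox a b - X)"
    using assms(3) XC by (simp add: negligible_iff_measure fmeasurable_Diff)
  then have "negligible (box a b - X)"
    by (rule negligible_subset) (use box_subset_cbox in blast)
  then have "box a b - X = {}"
    using assms(2) by (meson open_Diff open_box open_not_negligible)
  then have "closure (box a b) \<subseteq> X"
    using assms(2) by (simp add: closure_minimal)
  then show ?thesis
    using assms(1) by simp
qed

lemma mem_pixel: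
  "z \<in> pixel d k l \<longleftrightarrow> d * of_int k \<le> fst z \<and> fst z \<le> d * of_int (k + 1)
      \<and> d * of_int l \<le> snd z \<and> snd z \<le> d * of_int (l + 1)"
  unfolding pixel_def by (cases z) (simp add: cbox_Pair_eq)

lemma box_pixel_nonempty:
  fixes d :: real
  assumes "d > 0"
  shows "box (d * of_int k, d * of_int l) (d * of_int (k + 1), d * of_int (l + 1)) \<noteq> {}"
  using assms by (simp add: box_ne_empty Basis_prod_def)

lemma measure_pixel:
  assumes "d > 0"
  shows "measure lebesgue (pixel d k l) = d\<^sup>2"
proof -
  have "measure lebesgue (pixel d k l) = measure lborel (pixel d k l)"
    unfolding pixel_def by (rule measure_completion) simp
  also have "\<dots> = d\<^sup>2"
    using assms unfolding pixel_def measure_lborel_cbox_eq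
    by (simp add: Basis_prod_def power2_eq_square algebra_simps)
  finally show ?thesis .
qed

lemma measure_Int_pixel_le:
  assumes "d > 0" and "closed X"
  shows "measure lebesgue (X \<inter> pixel d k l) \<le> d\<^sup>2"
proof -
  have "measure lebesgue (X \<inter> pixel d k l) \<le> measure lebesgue (pixel d k l)"
    using assms(2) unfolding pixel_def
    by (intro measure_mono_fmeasurable) (auto simp: lmeasurable_compact closed_Int_compact)
  then show ?thesis
    using measure_pixel[OF assms(1)] by simp
qed

lemma pixel_Int_interior_eq_empty_if_negligible:
  assumes "d > 0" and "closed X" and "measure lebesgue (X \<inter> pixel d k l) = 0"
  shows "pixel d k l \<inter> interior X = {}"
  using cbox_Int_interior_eq_empty_if_negligible[OF box_pixel_nonempty[OF assms(1)] assms(2)] assms(3)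
  unfolding pixel_def by blast

lemma pixel_subset_if_measure_Int_eq:
  assumes "d > 0" and "closed X" and "measure lebesgue (X \<inter> pixel d k l) = d\<^sup>2"
  shows "pixel d k l \<subseteq> X"
  using cbox_subset_if_measure_Int_eq[OF box_pixel_nonempty[OF assms(1)] assms(2)]
    measure_pixel[OF assms(1), of k l] assms(3)
  unfolding pixel_def by simp

lemma eventually_same_grid_interval:
  fixes a d :: real
  assumes "d > 0"
  shows "\<forall>\<^sub>F b in nhds a. \<exists>k::int. d * of_int k \<le> a \<and> a \<le> d * of_int (k + 1)
                                 \<and> d * of_int k \<le> b \<and> b \<le> d * of_int (k + 1)"
proof -
  define f where "f = \<lfloor>a / d\<rfloor>"
  define c where "c = \<lceil>a / d\<rceil>"
  have f: "d * of_int f \<le> a" "a < d * of_int (f + 1)"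
    and c: "a \<le> d * of_int c" "d * of_int (c - 1) < a"
    using floor_divide_lower[OF assms, of a] floor_divide_upper[OF assms, of a]
      ceiling_divide_upper[OF assms, of a] ceiling_divide_lower[OF assms, of a]
    unfolding f_def c_def by (simp_all add: algebra_simps)
  have "\<forall>\<^sub>F b in nhds a. b \<in> {d * of_int (c - 1)<..<d * of_int (f + 1)}"
    using f c by (intro eventually_nhds_in_open) auto
  then show ?thesis
  proof (rule eventually_mono)
    fix b assume b: "b \<in> {d * of_int (c - 1)<..<d * of_int (f + 1)}"
    show "\<exists>k::int. d * of_int k \<le> a \<and> a \<le> d * of_int (k + 1) \<and> d * of_int k \<le> b \<and> b \<le> d * of_int (k + 1)"
    proof (cases "a \<le> b")
      case True
      then show ?thesis using f b by (intro exI[of _ f]) auto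
    next
      case False
      then show ?thesis using c b by (intro exI[of _ "c - 1"]) auto
    qed
  qed
qed

lemma eventually_same_pixel:
  assumes "d > 0"
  shows "\<forall>\<^sub>F z in nhds x. \<exists>k l. x \<in> pixel d k l \<and> z \<in> pixel d k l"
proof -
  have "\<forall>\<^sub>F z in nhds x. (\<exists>k::int. d * of_int k \<le> fst x \<and> fst x \<le> d * of_int (k + 1)
                                 \<and> d * of_int k \<le> fst z \<and> fst z \<le> d * of_int (k + 1))
                     \<and> (\<exists>l::int. d * of_int l \<le> snd x \<and> snd x \<le> d * of_int (l + 1)
                                 \<and> d * of_int l \<le> snd z \<and> snd z \<le> d * of_int (l + 1))"
    using eventually_compose_filterlim[OF eventually_same_grid_interval[OF assms] tendsto_fst[OF filterlim_ident]]
      eventually_compose_filterlim[OF eventually_same_grid_interval[OF assms] tendsto_snd[OF filterlim_ident]]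
    by (rule eventually_conj)
  then show ?thesis
    by (rule eventually_mono) (auto simp: mem_pixel)
qed

lemma grid_corner_in_common_pixels:
  assumes "d > 0" and "x \<in> pixel d k l" and "x \<in> pixel d k' l'"
  shows "(d * of_int (max k k'), d * of_int (max l l')) \<in> pixel d k l \<inter> pixel d k' l'"
proof -
  have "d * of_int (max i j) = max (d * of_int i) (d * of_int j)" for i j :: int
    using assms(1) by (cases "i \<le> j") (auto simp: max_def)
  then show ?thesis
    using assms unfolding Int_iff mem_pixel fst_conv snd_conv by (auto simp: algebra_simps)
qed

lemma r_regular_frontier_subset_closure_interior:
  assumes "r_regular r X"
  shows "frontier X \<subseteq> closure (interior X)"
proof
  fix x assume "x \<in> frontier X"
  then obtain xb xw where "ball xb r \<subseteq> X" "closure (ball xb r) \<inter> closure (ball xw r) = {x}"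
    using assms unfolding r_regular_def by blast
  then have "x \<in> closure (ball xb r)" and "ball xb r \<subseteq> interior X"
    by (blast, simp add: interior_maximal)
  then show "x \<in> closure (interior X)"
    using closure_mono by blast
qed

lemma frontier_point_in_mixed_pixel:
  assumes "d > 0" and "closed X" and "frontier X \<subseteq> closure (interior X)"
    and grid: "\<forall>k l. (d * of_int k, d * of_int l) \<notin> frontier X"
    and "x \<in> frontier X"
  shows "\<exists>k l. x \<in> pixel d k l \<and> 0 < measure lebesgue (X \<inter> pixel d k l)
                \<and> measure lebesgue (X \<inter> pixel d k l) < d\<^sup>2"
proof (rule ccontr)
  assume no_mixed: "\<not> ?thesis"
  let ?m = "\<lambda>k l. measure lebesgue (X \<inter> pixel d k l)"
  obtain T where T: "open T" "x \<in> T" "\<forall>z\<in>T. \<exists>k l. x \<in> pixel d k l \<and> z \<in> pixel d k l"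
    using eventually_same_pixel[OF assms(1), of x] unfolding eventually_nhds by blast
  have "x \<in> closure (interior X)" "x \<in> closure (- X)"
    using assms(3,5) by (auto simp: frontier_def closure_complement)
  then have "interior X \<inter> T \<noteq> {}" "- X \<inter> T \<noteq> {}"
    using closure_iff_nhds_not_empty T(1,2) by blast+
  then obtain k l k' l' where in1: "x \<in> pixel d k l" "pixel d k l \<inter> interior X \<noteq> {}"
      and in2: "x \<in> pixel d k' l'" "\<not> pixel d k' l' \<subseteq> X"
    using T(3) by blast
  have two_valued: "?m i j = 0 \<or> ?m i j = d\<^sup>2" if "x \<in> pixel d i j" for i j
  proof -
    have "\<not> (0 < ?m i j \<and> ?m i j < d\<^sup>2)"
      using no_mixed that by blast
    then show ?thesis
      using measure_Int_pixel_le[OF assms(1,2), of i j] measure_nonneg[of lebesgue "X \<inter> pixel d i j"]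
      by linarith
  qed
  have "?m k l \<noteq> 0"
    using pixel_Int_interior_eq_empty_if_negligible[OF assms(1,2)] in1(2) by blast
  then have "pixel d k l \<subseteq> X"
    using two_valued[OF in1(1)] pixel_subset_if_measure_Int_eq[OF assms(1,2)] by blast
  have "?m k' l' \<noteq> d\<^sup>2"
    using pixel_subset_if_measure_Int_eq[OF assms(1,2)] in2(2) by blast
  then have "pixel d k' l' \<inter> interior X = {}"
    using two_valued[OF in2(1)] pixel_Int_interior_eq_empty_if_negligible[OF assms(1,2)] by blast
  with \<open>pixel d k l \<subseteq> X\<close> have "(d * of_int (max k k'), d * of_int (max l l')) \<in> frontier X"
    using grid_corner_in_common_pixels[OF assms(1) in1(1) in2(1)] assms(2)
    by (auto simp: frontier_def)
  then show False
    using grid by blast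
qed

lemma pixel_meets_frontier_if_mixed:
  assumes "d > 0" and "0 < measure lebesgue (X \<inter> pixel d k l)"
    and "measure lebesgue (X \<inter> pixel d k l) < d\<^sup>2"
  shows "pixel d k l \<inter> frontier X \<noteq> {}"
proof -
  have "pixel d k l \<inter> X \<noteq> {}"
    using assms(2) by (metis Int_commute less_irrefl measure_empty)
  moreover have "pixel d k l - X \<noteq> {}"
    using assms(3) measure_pixel[OF assms(1)] by (metis Diff_eq_empty_iff inf.absorb2 less_irrefl)
  moreover have "connected (pixel d k l)"
    unfolding pixel_def by (simp add: convex_connected)
  ultimately show ?thesis
    using connected_Int_frontier by blast
qed

lemma digital_image_strictly_between_iff:
  assumes "d > 0" and "closed X" and "\<phi> 0 = 0" and "\<phi> 1 = 1"
    and "\<forall>t. 0 < t \<and> t < 1 \<longrightarrow> 0 < \<phi> t \<and> \<phi> t < 1"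
  shows "0 < digital_image d \<phi> X (k, l) \<and> digital_image d \<phi> X (k, l) < 1 \<longleftrightarrow>
         0 < measure lebesgue (X \<inter> pixel d k l) \<and> measure lebesgue (X \<inter> pixel d k l) < d\<^sup>2"
proof -
  define t where "t = measure lebesgue (X \<inter> pixel d k l) / d\<^sup>2"
  have "0 \<le> t" and "t \<le> 1"
    using measure_Int_pixel_le[OF assms(1,2)] assms(1) by (simp_all add: t_def)
  then have "0 < \<phi> t \<and> \<phi> t < 1 \<longleftrightarrow> 0 < t \<and> t < 1"
    using assms(3-5) by (cases "t = 0"; cases "t = 1") auto
  moreover have "0 < t \<and> t < 1 \<longleftrightarrow>
      0 < measure lebesgue (X \<inter> pixel d k l) \<and> measure lebesgue (X \<inter> pixel d k l) < d\<^sup>2"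
    using assms(1) by (simp add: t_def zero_less_divide_iff divide_less_eq)
  moreover have "digital_image d \<phi> X (k, l) = \<phi> t"
    by (simp add: digital_image_def t_def)
  ultimately show ?thesis
    by simp
qed

definition pixel_center :: "real \<Rightarrow> int \<Rightarrow> int \<Rightarrow> real \<times> real" where
  "pixel_center d k l = (d * (of_int k + 1/2), d * (of_int l + 1/2))"

lemma dist_pixel_center_le:
  assumes "d > 0" and "y \<in> pixel d k l"
  shows "dist (pixel_center d k l) y \<le> d / sqrt 2"
proof -
  have "\<bar>d * (of_int k + 1/2) - fst y\<bar> \<le> d / 2" "\<bar>d * (of_int l + 1/2) - snd y\<bar> \<le> d / 2"
    using assms(2) unfolding mem_pixel abs_le_iff of_int_add of_int_1 distrib_left by auto
  then have "(d * (of_int k + 1/2) - fst y)\<^sup>2 + (d * (of_int l + 1/2) - snd y)\<^sup>2 \<le> d\<^sup>2 / 2"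
    using abs_le_square_iff[of _ "d / 2"] assms(1) by (fastforce simp: power_divide)
  then have "dist (pixel_center d k l) y \<le> sqrt (d\<^sup>2 / 2)"
    by (cases y) (simp add: pixel_center_def dist_Pair_Pair dist_real_def)
  also have "\<dots> = d / sqrt 2"
    using assms(1) by (simp add: real_sqrt_divide)
  finally show ?thesis .
qed

lemma pixel_center_eq_if_dist_less:
  assumes "d > 0" and "dist (pixel_center d k l) (pixel_center d k' l') < d"
  shows "pixel_center d k l = pixel_center d k' l'"
proof -
  have grid_eq: "i = j" if "\<bar>d * (of_int i + 1/2) - d * (of_int j + 1/2)\<bar> < d" for i j :: int
  proof -
    have "d * \<bar>of_int i - of_int j\<bar> < d * 1"
      using that assms(1) by (simp add: abs_mult flip: right_diff_distrib)
    then have "\<bar>of_int i - of_int j\<bar> < (1::real)"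
      using assms(1) by (simp only: mult_less_cancel_left_pos)
    then show "i = j" by linarith
  qed
  have "\<bar>d * (of_int k + 1/2) - d * (of_int k' + 1/2)\<bar> < d"
    and "\<bar>d * (of_int l + 1/2) - d * (of_int l' + 1/2)\<bar> < d"
    using dist_fst_le[of "pixel_center d k l" "pixel_center d k' l'"]
      dist_snd_le[of "pixel_center d k l" "pixel_center d k' l'"] assms(2)
    by (simp_all add: pixel_center_def dist_real_def)
  then show ?thesis
    using grid_eq by metis
qed

lemma pixel_center_near_frontier_if_mixed:
  assumes "d > 0" and "0 < measure lebesgue (X \<inter> pixel d k l)"
    and "measure lebesgue (X \<inter> pixel d k l) < d\<^sup>2"
  shows "\<exists>z\<in>frontier X. dist (pixel_center d k l) z \<le> d / sqrt 2"
  using pixel_meets_frontier_if_mixed[OF assms] dist_pixel_center_le[OF assms(1)] by blast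

definition mixed_pixel_centers :: "real \<Rightarrow> (int \<times> int \<Rightarrow> real) \<Rightarrow> (real \<times> real) set" where
  "mixed_pixel_centers d I = {pixel_center d k l | k l. 0 < I (k, l) \<and> I (k, l) < 1}"

lemma frontier_mixed_pixel_centers:
  assumes "d > 0"
  shows "frontier (mixed_pixel_centers d I) = mixed_pixel_centers d I"
proof (rule frontier_eq_self_if_uniformly_discrete[OF assms])
  show "\<forall>x\<in>mixed_pixel_centers d I. \<forall>y\<in>mixed_pixel_centers d I. dist y x < d \<longrightarrow> y = x"
    unfolding mixed_pixel_centers_def using pixel_center_eq_if_dist_less[OF assms] by blast
qed

theorem theorem2p6:
  fixes r d :: real and \<phi> :: "real \<Rightarrow> real"
  assumes "r > 0" and "d > 0" and "d * sqrt 2 < r"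
    and "mono_on {0..1} \<phi>" and "\<phi> 0 = 0" and "\<phi> 1 = 1"
    and "\<forall>t. 0 < t \<and> t < 1 \<longrightarrow> 0 < \<phi> t \<and> \<phi> t < 1"
  shows "\<exists>F :: (int \<times> int \<Rightarrow> real) \<Rightarrow> (real \<times> real) set.
           \<forall>X. bounded X \<and> r_regular r X \<and>
               (\<forall>k l :: int. (d * of_int k, d * of_int l) \<notin> frontier X) \<longrightarrow>
               hausdorff_dist (frontier (F (digital_image d \<phi> X))) (frontier X) < ereal d"
proof (intro exI allI impI)
  fix X :: "(real \<times> real) set"
  assume X: "bounded X \<and> r_regular r X \<and> (\<forall>k l :: int. (d * of_int k, d * of_int l) \<notin> frontier X)"
  then have "closed X"
    by (simp add: r_regular_def)
  let ?\<Gamma> = "mixed_pixel_centers d (digital_image d \<phi> X)"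
  have \<Gamma>: "?\<Gamma> = {pixel_center d k l | k l. 0 < measure lebesgue (X \<inter> pixel d k l)
                                           \<and> measure lebesgue (X \<inter> pixel d k l) < d\<^sup>2}"
    unfolding mixed_pixel_centers_def
      digital_image_strictly_between_iff[OF assms(2) \<open>closed X\<close> assms(5-7)] ..
  have "\<forall>y\<in>?\<Gamma>. \<exists>z\<in>frontier X. dist y z \<le> d / sqrt 2"
  proof
    fix y assume "y \<in> ?\<Gamma>"
    then obtain k l where "y = pixel_center d k l" and "0 < measure lebesgue (X \<inter> pixel d k l)"
        and "measure lebesgue (X \<inter> pixel d k l) < d\<^sup>2"
      unfolding \<Gamma> by blast
    then show "\<exists>z\<in>frontier X. dist y z \<le> d / sqrt 2"
      using pixel_center_near_frontier_if_mixed[OF assms(2)] by blast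
  qed
  moreover have "\<forall>z\<in>frontier X. \<exists>y\<in>?\<Gamma>. dist y z \<le> d / sqrt 2"
  proof
    fix z assume "z \<in> frontier X"
    then obtain k l where "z \<in> pixel d k l" and "0 < measure lebesgue (X \<inter> pixel d k l)"
        and "measure lebesgue (X \<inter> pixel d k l) < d\<^sup>2"
      using frontier_point_in_mixed_pixel[OF assms(2) \<open>closed X\<close>
          r_regular_frontier_subset_closure_interior[of r X]] X
      by blast
    then show "\<exists>y\<in>?\<Gamma>. dist y z \<le> d / sqrt 2"
      unfolding \<Gamma> using dist_pixel_center_le[OF assms(2)] by blast
  qed
  ultimately have "hausdorff_dist (frontier ?\<Gamma>) (frontier X) \<le> ereal (d / sqrt 2)"
    unfolding frontier_mixed_pixel_centers[OF assms(2)] by (rule hausdorff_dist_le)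
  also have "\<dots> < ereal d"
    using assms(2) by (simp add: divide_less_eq)
  finally show "hausdorff_dist (frontier (mixed_pixel_centers d (digital_image d \<phi> X))) (frontier X) < ereal d" .
qed

end
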